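(* For $\lambda,\mu,\nu\in k$ let $$\mathscr{E}_{\lambda,\mu,\nu}=\left\{\begin{pmatrix}a&0&0&0\\ b&a&0&0\\ c&0&a&0\\ d&\lambda b+\nu c&\nu b+\mu c&a\end{pmatrix}\;\middle|\;a,b,c,d\in k\right\},$$ a commutative $k$-algebra under the usual matrix multiplication. Then $\mathscr{E}_{\lambda,\mu,\nu}$ is a symmetric Frobenius $k$-algebra if and only if $\lambda\mu-\nu^2\neq0$.
   Context: $k$ is an algebraically closed field of characteristic zero. A finite-dimensional $k$-algebra $E$ (concentrated in degree $0$) is Frobenius if $E\cong E^*=\mathrm{Hom}_k(E,k)$ as left $E$-modules, and symmetric Frobenius if $E\cong E^*$ as $E$-bimodules. *)

theory Defs
  imports "Jordan_Normal_Form.Matrix" "HOL-Computational_Algebra.Polynomial"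
begin

definition alg_closed :: "'a::field itself \<Rightarrow> bool" where
  "alg_closed _ \<longleftrightarrow> (\<forall>p :: 'a poly. degree p > 0 \<longrightarrow> (\<exists>x. poly p x = 0))"

definition E_mat :: "'a::field \<Rightarrow> 'a \<Rightarrow> 'a \<Rightarrow> 'a \<Rightarrow> 'a \<Rightarrow> 'a \<Rightarrow> 'a \<Rightarrow> 'a mat" where
  "E_mat lam mu nu a b c d = mat_of_rows_list 4
     [[a, 0, 0, 0],
      [b, a, 0, 0],
      [c, 0, a, 0],
      [d, lam * b + nu * c, nu * b + mu * c, a]]"

definition E_alg :: "'a::field \<Rightarrow> 'a \<Rightarrow> 'a \<Rightarrow> 'a mat set" where
  "E_alg lam mu nu = {E_mat lam mu nu a b c d | a b c d. True}"

definition lin_dual :: "'a::field mat set \<Rightarrow> ('a mat \<Rightarrow> 'a) set" where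
  "lin_dual A = {f. (\<forall>x\<in>A. \<forall>y\<in>A. f (x + y) = f x + f y)
                  \<and> (\<forall>c. \<forall>x\<in>A. f (c \<cdot>\<^sub>m x) = c * f x)
                  \<and> (\<forall>x. x \<notin> A \<longrightarrow> f x = 0)}"

definition dual_act :: "'a::field mat set \<Rightarrow> 'a mat \<Rightarrow> ('a mat \<Rightarrow> 'a) \<Rightarrow> 'a mat \<Rightarrow> ('a mat \<Rightarrow> 'a)" where
  "dual_act A x f y = (\<lambda>e. if e \<in> A then f (y * e * x) else 0)"

definition symmetric_frobenius :: "'a::field mat set \<Rightarrow> bool" where
  "symmetric_frobenius A \<longleftrightarrow> (\<exists>\<phi> :: 'a mat \<Rightarrow> ('a mat \<Rightarrow> 'a).
      bij_betw \<phi> A (lin_dual A)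
    \<and> (\<forall>x\<in>A. \<forall>y\<in>A. \<phi> (x + y) = (\<lambda>e. \<phi> x e + \<phi> y e))
    \<and> (\<forall>c. \<forall>x\<in>A. \<phi> (c \<cdot>\<^sub>m x) = (\<lambda>e. c * \<phi> x e))
    \<and> (\<forall>x\<in>A. \<forall>a\<in>A. \<forall>y\<in>A. \<phi> (x * a * y) = dual_act A x (\<phi> a) y))"

end

theory Submission
  imports Defs
begin

text \<open>
  For a commutative matrix algebra \<open>A\<close> with unit, a bimodule isomorphism \<open>\<phi> : A \<rightarrow> A*\<close> is
  determined by \<open>\<epsilon> = \<phi> 1\<close> via \<open>\<phi> x = \<epsilon> (x \<cdot> _)\<close>, and conversely commutativity makes every
  such map bimodule-linear; so \<open>A\<close> is symmetric Frobenius iff \<open>x \<mapsto> \<epsilon> (x \<cdot> _)\<close> is bijective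
  for some functional \<open>\<epsilon>\<close>. In \<open>E_alg \<lambda> \<mu> \<nu>\<close>, with coordinates \<open>(a, b, c, d)\<close>, the product pairs the
  \<open>(b, c)\<close>-parts through the Gram matrix \<open>[[\<lambda>, \<nu>], [\<nu>, \<mu>]]\<close> into the socle coordinate \<open>d\<close>.
  If \<open>\<lambda>\<mu> - \<nu>\<^sup>2 \<noteq> 0\<close>, taking \<open>\<epsilon> = d\<close> reduces bijectivity to solving a regular 2\<times>2 system.
  If \<open>\<lambda>\<mu> - \<nu>\<^sup>2 = 0\<close>, a kernel vector \<open>(u, v)\<close> of the Gram matrix, corrected by a multiple
  of the socle generator, gives a nonzero \<open>y\<close> with \<open>\<epsilon> (y \<cdot> _) = 0\<close>, whatever \<open>\<epsilon>\<close> is.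
\<close>

definition comm_matrix_algebra :: "nat \<Rightarrow> 'a::field mat set \<Rightarrow> bool" where
  "comm_matrix_algebra n A \<longleftrightarrow> A \<subseteq> carrier_mat n n
     \<and> (\<forall>x\<in>A. \<forall>y\<in>A. x + y \<in> A \<and> x * y \<in> A \<and> x * y = y * x)
     \<and> (\<forall>c. \<forall>x\<in>A. c \<cdot>\<^sub>m x \<in> A)"

definition frobenius_map :: "'a::field mat set \<Rightarrow> ('a mat \<Rightarrow> 'a) \<Rightarrow> 'a mat \<Rightarrow> ('a mat \<Rightarrow> 'a)" where
  "frobenius_map A \<epsilon> x = (\<lambda>e. if e \<in> A then \<epsilon> (x * e) else 0)"

context
  fixes A :: "'a::field mat set" and n :: nat
  assumes alg: "comm_matrix_algebra n A"
begin

lemma comm_matrix_algebra_carrier: "x \<in> A \<Longrightarrow> x \<in> carrier_mat n n"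
  using alg by (auto simp: comm_matrix_algebra_def)

lemma comm_matrix_algebra_add_closed: "x \<in> A \<Longrightarrow> y \<in> A \<Longrightarrow> x + y \<in> A"
  using alg by (auto simp: comm_matrix_algebra_def)

lemma comm_matrix_algebra_mult_closed: "x \<in> A \<Longrightarrow> y \<in> A \<Longrightarrow> x * y \<in> A"
  using alg by (auto simp: comm_matrix_algebra_def)

lemma comm_matrix_algebra_smult_closed: "x \<in> A \<Longrightarrow> c \<cdot>\<^sub>m x \<in> A"
  using alg by (auto simp: comm_matrix_algebra_def)

lemma comm_matrix_algebra_mult_commute: "x \<in> A \<Longrightarrow> y \<in> A \<Longrightarrow> x * y = y * x"
  using alg by (auto simp: comm_matrix_algebra_def)

lemma comm_matrix_algebra_mult_assoc: "x \<in> A \<Longrightarrow> y \<in> A \<Longrightarrow> z \<in> A \<Longrightarrow> x * y * z = x * (y * z)"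
  by (meson assoc_mult_mat comm_matrix_algebra_carrier)

lemma frobenius_map_in_lin_dual:
  assumes \<epsilon>: "\<epsilon> \<in> lin_dual A" and x: "x \<in> A"
  shows "frobenius_map A \<epsilon> x \<in> lin_dual A"
proof -
  have "\<epsilon> (x * (e + e')) = \<epsilon> (x * e) + \<epsilon> (x * e')" if "e \<in> A" "e' \<in> A" for e e'
  proof -
    have "x * (e + e') = x * e + x * e'"
      using that x by (meson mult_add_distrib_mat comm_matrix_algebra_carrier)
    then show ?thesis
      using that x \<epsilon> comm_matrix_algebra_mult_closed by (simp add: lin_dual_def)
  qed
  moreover have "\<epsilon> (x * (c \<cdot>\<^sub>m e)) = c * \<epsilon> (x * e)" if "e \<in> A" for c e
  proof -
    have "x * (c \<cdot>\<^sub>m e) = c \<cdot>\<^sub>m (x * e)"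
      using that x by (meson mult_smult_distrib comm_matrix_algebra_carrier)
    then show ?thesis
      using that x \<epsilon> comm_matrix_algebra_mult_closed by (simp add: lin_dual_def)
  qed
  ultimately show ?thesis
    by (auto simp: lin_dual_def frobenius_map_def comm_matrix_algebra_add_closed
        comm_matrix_algebra_smult_closed)
qed

lemma symmetric_frobenius_if_frobenius_map_bij:
  assumes \<epsilon>: "\<epsilon> \<in> lin_dual A" and bij: "bij_betw (frobenius_map A \<epsilon>) A (lin_dual A)"
  shows "symmetric_frobenius A"
proof -
  let ?\<phi> = "frobenius_map A \<epsilon>"
  have \<epsilon>_add: "\<epsilon> (x + y) = \<epsilon> x + \<epsilon> y" if "x \<in> A" "y \<in> A" for x y
    using \<epsilon> that by (simp add: lin_dual_def)
  have \<epsilon>_smult: "\<epsilon> (c \<cdot>\<^sub>m x) = c * \<epsilon> x" if "x \<in> A" for x c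
    using \<epsilon> that by (simp add: lin_dual_def)
  have "?\<phi> (x + y) = (\<lambda>e. ?\<phi> x e + ?\<phi> y e)" if "x \<in> A" "y \<in> A" for x y
  proof
    fix e
    show "?\<phi> (x + y) e = ?\<phi> x e + ?\<phi> y e"
    proof (cases "e \<in> A")
      case True
      then have "(x + y) * e = x * e + y * e"
        using that by (meson add_mult_distrib_mat comm_matrix_algebra_carrier)
      then show ?thesis
        using True that by (simp add: frobenius_map_def \<epsilon>_add comm_matrix_algebra_mult_closed)
    qed (simp add: frobenius_map_def)
  qed
  moreover have "?\<phi> (c \<cdot>\<^sub>m x) = (\<lambda>e. c * ?\<phi> x e)" if "x \<in> A" for c x
  proof
    fix e
    show "?\<phi> (c \<cdot>\<^sub>m x) e = c * ?\<phi> x e"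
    proof (cases "e \<in> A")
      case True
      then have "(c \<cdot>\<^sub>m x) * e = c \<cdot>\<^sub>m (x * e)"
        using that by (meson mult_smult_assoc_mat comm_matrix_algebra_carrier)
      then show ?thesis
        using True that by (simp add: frobenius_map_def \<epsilon>_smult comm_matrix_algebra_mult_closed)
    qed (simp add: frobenius_map_def)
  qed
  moreover have "?\<phi> (x * a * y) = dual_act A x (?\<phi> a) y" if "x \<in> A" "a \<in> A" "y \<in> A" for x a y
  proof
    fix e
    show "?\<phi> (x * a * y) e = dual_act A x (?\<phi> a) y e"
    proof (cases "e \<in> A")
      case True
      note closed = comm_matrix_algebra_mult_closed
      have "a * (y * e * x) = a * (x * (y * e))"
        using True that closed comm_matrix_algebra_mult_commute[of "y * e" x] by simp
      also have "\<dots> = a * x * (y * e)"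
        using True that closed comm_matrix_algebra_mult_assoc[of a x "y * e"] by simp
      also have "\<dots> = x * a * y * e"
        using True that closed comm_matrix_algebra_mult_commute[of a x]
          comm_matrix_algebra_mult_assoc[of "x * a" y e] by simp
      finally show ?thesis
        using True that closed by (simp add: frobenius_map_def dual_act_def)
    qed (simp add: frobenius_map_def dual_act_def)
  qed
  ultimately show ?thesis
    unfolding symmetric_frobenius_def using bij by blast
qed

lemma symmetric_frobenius_imp_frobenius_map_bij:
  assumes "symmetric_frobenius A" and u: "u \<in> A" "\<And>x. x \<in> A \<Longrightarrow> u * x = x"
  shows "\<exists>\<epsilon>\<in>lin_dual A. bij_betw (frobenius_map A \<epsilon>) A (lin_dual A)"
proof -
  obtain \<phi> where bij: "bij_betw \<phi> A (lin_dual A)"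
    and equivariant: "\<And>x a y. x \<in> A \<Longrightarrow> a \<in> A \<Longrightarrow> y \<in> A \<Longrightarrow> \<phi> (x * a * y) = dual_act A x (\<phi> a) y"
    using assms(1) unfolding symmetric_frobenius_def by blast
  have \<phi>_eq: "\<phi> x = frobenius_map A (\<phi> u) x" if x: "x \<in> A" for x
  proof -
    have "\<phi> x = \<phi> (u * u * x)"
      using u x by simp
    also have "\<dots> = dual_act A u (\<phi> u) x"
      by (rule equivariant[OF u(1) u(1) x])
    also have "\<dots> = frobenius_map A (\<phi> u) x"
    proof
      fix e
      have "x * e * u = x * e" if "e \<in> A"
      proof -
        have xe: "x * e \<in> A"
          using x that by (rule comm_matrix_algebra_mult_closed)
        then have "x * e * u = u * (x * e)"
          using u(1) by (rule comm_matrix_algebra_mult_commute)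
        also have "\<dots> = x * e"
          using xe by (rule u(2))
        finally show ?thesis .
      qed
      then show "dual_act A u (\<phi> u) x e = frobenius_map A (\<phi> u) x e"
        by (simp add: dual_act_def frobenius_map_def)
    qed
    finally show ?thesis .
  qed
  have "bij_betw \<phi> A (lin_dual A) \<longleftrightarrow> bij_betw (frobenius_map A (\<phi> u)) A (lin_dual A)"
    by (rule bij_betw_cong) (rule \<phi>_eq)
  then have "bij_betw (frobenius_map A (\<phi> u)) A (lin_dual A)"
    using bij by (rule iffD1)
  moreover have "\<phi> u \<in> lin_dual A"
    by (rule bij_betw_apply[OF bij u(1)])
  ultimately show ?thesis by blast
qed

lemma symmetric_frobenius_iff_frobenius_map_bij:
  assumes "u \<in> A" "\<And>x. x \<in> A \<Longrightarrow> u * x = x"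
  shows "symmetric_frobenius A \<longleftrightarrow> (\<exists>\<epsilon>\<in>lin_dual A. bij_betw (frobenius_map A \<epsilon>) A (lin_dual A))"
  using symmetric_frobenius_imp_frobenius_map_bij[OF _ assms] symmetric_frobenius_if_frobenius_map_bij
  by blast

end

lemma det2_nonzero_kernel_trivial:
  fixes l m n u v :: "'a::field"
  assumes "l * m - n\<^sup>2 \<noteq> 0" "l * u + n * v = 0" "n * u + m * v = 0"
  shows "u = 0" "v = 0"
proof -
  have "(l * m - n\<^sup>2) * u = m * (l * u + n * v) - n * (n * u + m * v)"
    "(l * m - n\<^sup>2) * v = l * (n * u + m * v) - n * (l * u + n * v)"
    by (simp_all add: algebra_simps power2_eq_square)
  then show "u = 0" "v = 0"
    using assms by simp_all
qed

lemma det2_nonzero_solvable: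
  fixes l m n p q :: "'a::field"
  assumes "l * m - n\<^sup>2 \<noteq> 0"
  obtains b c where "l * b + n * c = p" "n * b + m * c = q"
proof -
  let ?D = "l * m - n\<^sup>2"
  have "l * (m * p - n * q) + n * (l * q - n * p) = ?D * p"
    "n * (m * p - n * q) + m * (l * q - n * p) = ?D * q"
    by (simp_all add: algebra_simps power2_eq_square)
  then have "l * ((m * p - n * q) / ?D) + n * ((l * q - n * p) / ?D) = p"
    "n * ((m * p - n * q) / ?D) + m * ((l * q - n * p) / ?D) = q"
    using assms by (simp_all add: times_divide_eq_right flip: add_divide_distrib)
  then show ?thesis
    by (rule that)
qed

lemma det2_zero_kernel_nontrivial:
  fixes l m n :: "'a::field"
  assumes "l * m - n\<^sup>2 = 0"
  obtains u v where "(u, v) \<noteq> (0, 0)" "l * u + n * v = 0" "n * u + m * v = 0"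
proof (cases "l = 0 \<and> n = 0")
  case True
  then show ?thesis
    using that[of 1 0] by simp
next
  case False
  have "n * n + m * - l = 0"
    using assms by (simp add: algebra_simps power2_eq_square)
  then show ?thesis
    using that[of n "- l"] False by (auto simp: algebra_simps)
qed

lemma linear_form_nontrivial_zero:
  fixes p q :: "'a::field"
  obtains t s where "(t, s) \<noteq> (0, 0)" "p * t + q * s = 0"
proof (cases "q = 0")
  case True
  then show ?thesis
    using that[of 0 1] by simp
next
  case False
  then show ?thesis
    using that[of q "- p"] by (simp add: algebra_simps)
qed

lemma dim_E_mat [simp]:
  "dim_row (E_mat l m n a b c d) = 4" "dim_col (E_mat l m n a b c d) = 4"
  by (simp_all add: E_mat_def mat_of_rows_list_def)

lemma E_mat_first_column [simp]:
  "E_mat l m n a b c d $$ (0, 0) = a" "E_mat l m n a b c d $$ (1, 0) = b"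
  "E_mat l m n a b c d $$ (2, 0) = c" "E_mat l m n a b c d $$ (3, 0) = d"
  by (simp_all add: E_mat_def mat_of_rows_list_def)

lemma E_mat_eq_iff [simp]:
  "E_mat l m n a b c d = E_mat l m n a' b' c' d' \<longleftrightarrow> a = a' \<and> b = b' \<and> c = c' \<and> d = d'"
  by (metis E_mat_first_column)

lemma E_mat_mult [simp]:
  "E_mat l m n a b c d * E_mat l m n a' b' c' d' =
     E_mat l m n (a * a') (a * b' + a' * b) (a * c' + a' * c)
       (a * d' + a' * d + (l * b * b' + n * (b * c' + c * b') + m * c * c'))"
  by (rule eq_matI)
    (auto simp: E_mat_def mat_of_rows_list_def scalar_prod_def numeral_eq_Suc less_Suc_eq
      lessThan_Suc algebra_simps)

lemma E_mat_add [simp]: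
  "E_mat l m n a b c d + E_mat l m n a' b' c' d' = E_mat l m n (a + a') (b + b') (c + c') (d + d')"
  by (rule eq_matI) (auto simp: E_mat_def mat_of_rows_list_def numeral_eq_Suc less_Suc_eq algebra_simps)

lemma E_mat_smult [simp]:
  "x \<cdot>\<^sub>m E_mat l m n a b c d = E_mat l m n (x * a) (x * b) (x * c) (x * d)"
  by (rule eq_matI) (auto simp: E_mat_def mat_of_rows_list_def numeral_eq_Suc less_Suc_eq algebra_simps)

lemma E_mat_in_E_alg [simp]: "E_mat l m n a b c d \<in> E_alg l m n"
  by (auto simp: E_alg_def)

lemma E_algE:
  assumes "x \<in> E_alg l m n"
  obtains a b c d where "x = E_mat l m n a b c d"
  using assms by (auto simp: E_alg_def)

lemma comm_matrix_algebra_E_alg: "comm_matrix_algebra 4 (E_alg l m n)"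
  by (auto simp: comm_matrix_algebra_def algebra_simps elim!: E_algE)

lemma E_mat_one_mult: "x \<in> E_alg l m n \<Longrightarrow> E_mat l m n 1 0 0 0 * x = x"
  by (auto elim: E_algE)

lemma lin_dual_E_alg_expand:
  assumes "f \<in> lin_dual (E_alg l m n)"
  shows "f (E_mat l m n a b c d) = a * f (E_mat l m n 1 0 0 0) + b * f (E_mat l m n 0 1 0 0)
    + c * f (E_mat l m n 0 0 1 0) + d * f (E_mat l m n 0 0 0 1)"
proof -
  let ?E = "E_mat l m n"
  have add: "f (x + y) = f x + f y" if "x \<in> E_alg l m n" "y \<in> E_alg l m n" for x y
    using assms that by (simp add: lin_dual_def)
  have smult: "f (t \<cdot>\<^sub>m x) = t * f x" if "x \<in> E_alg l m n" for x t
    using assms that by (simp add: lin_dual_def)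
  have "f (?E a b c d) = f (?E a 0 0 0) + f (?E 0 b 0 0) + f (?E 0 0 c 0) + f (?E 0 0 0 d)"
    using add[of "?E a 0 0 0" "?E 0 b 0 0"] add[of "?E a b 0 0" "?E 0 0 c 0"]
      add[of "?E a b c 0" "?E 0 0 0 d"]
    by simp
  also have "\<dots> = a * f (?E 1 0 0 0) + b * f (?E 0 1 0 0) + c * f (?E 0 0 1 0) + d * f (?E 0 0 0 1)"
    using smult[of "?E 1 0 0 0" a] smult[of "?E 0 1 0 0" b] smult[of "?E 0 0 1 0" c]
      smult[of "?E 0 0 0 1" d]
    by simp
  finally show ?thesis .
qed

lemma lin_dual_E_alg_eqI:
  assumes f: "f \<in> lin_dual (E_alg l m n)" and g: "g \<in> lin_dual (E_alg l m n)"
    and "f (E_mat l m n 1 0 0 0) = g (E_mat l m n 1 0 0 0)"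
    and "f (E_mat l m n 0 1 0 0) = g (E_mat l m n 0 1 0 0)"
    and "f (E_mat l m n 0 0 1 0) = g (E_mat l m n 0 0 1 0)"
    and "f (E_mat l m n 0 0 0 1) = g (E_mat l m n 0 0 0 1)"
  shows "f = g"
proof
  fix e
  show "f e = g e"
  proof (cases "e \<in> E_alg l m n")
    case True
    then show ?thesis
    proof (rule E_algE)
      fix a b c d
      assume "e = E_mat l m n a b c d"
      then show ?thesis
        using assms(3-6) by (simp add: lin_dual_E_alg_expand[OF f, of a b c d]
            lin_dual_E_alg_expand[OF g, of a b c d])
    qed
  next
    case False
    then show ?thesis
      using f g by (simp add: lin_dual_def)
  qed
qed

definition E_socle_coord :: "'a::field \<Rightarrow> 'a \<Rightarrow> 'a \<Rightarrow> 'a mat \<Rightarrow> 'a" where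
  "E_socle_coord l m n e = (if e \<in> E_alg l m n then e $$ (3, 0) else 0)"

lemma E_socle_coord_in_lin_dual: "E_socle_coord l m n \<in> lin_dual (E_alg l m n)"
  by (auto simp: lin_dual_def E_socle_coord_def elim!: E_algE)

lemma frobenius_map_E_socle_coord [simp]:
  "frobenius_map (E_alg l m n) (E_socle_coord l m n) (E_mat l m n a b c d) (E_mat l m n a' b' c' d')
     = a * d' + a' * d + (l * b * b' + n * (b * c' + c * b') + m * c * c')"
  by (simp add: frobenius_map_def E_socle_coord_def)

lemma E_alg_frobenius_map_bij:
  fixes l m n :: "'a::field"
  assumes D: "l * m - n\<^sup>2 \<noteq> 0"
  shows "bij_betw (frobenius_map (E_alg l m n) (E_socle_coord l m n)) (E_alg l m n)
           (lin_dual (E_alg l m n))"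
proof -
  let ?A = "E_alg l m n" and ?E = "E_mat l m n"
  let ?\<phi> = "frobenius_map ?A (E_socle_coord l m n)"
  have into: "?\<phi> x \<in> lin_dual ?A" if "x \<in> ?A" for x
    using comm_matrix_algebra_E_alg E_socle_coord_in_lin_dual that by (rule frobenius_map_in_lin_dual)
  have "inj_on ?\<phi> ?A"
  proof (rule inj_onI)
    fix x y
    assume "x \<in> ?A" "y \<in> ?A" and eq: "?\<phi> x = ?\<phi> y"
    obtain a b c d where x: "x = ?E a b c d"
      using \<open>x \<in> ?A\<close> by (rule E_algE)
    obtain a' b' c' d' where y: "y = ?E a' b' c' d'"
      using \<open>y \<in> ?A\<close> by (rule E_algE)
    have "?\<phi> x e = ?\<phi> y e" for e
      using eq by simp
    from this[of "?E 1 0 0 0"] this[of "?E 0 1 0 0"] this[of "?E 0 0 1 0"] this[of "?E 0 0 0 1"]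
    have "d = d'" "l * b + n * c = l * b' + n * c'" "n * b + m * c = n * b' + m * c'" "a = a'"
      unfolding x y by simp_all
    moreover from this have "l * (b - b') + n * (c - c') = 0" "n * (b - b') + m * (c - c') = 0"
      by (simp_all add: algebra_simps)
    then have "b - b' = 0" "c - c' = 0"
      by (rule det2_nonzero_kernel_trivial[OF D])+
    ultimately show "x = y"
      unfolding x y by simp
  qed
  moreover have "lin_dual ?A \<subseteq> ?\<phi> ` ?A"
  proof
    fix f
    assume f: "f \<in> lin_dual ?A"
    obtain b c where bc: "l * b + n * c = f (?E 0 1 0 0)" "n * b + m * c = f (?E 0 0 1 0)"
      using det2_nonzero_solvable[OF D] .
    have "f = ?\<phi> (?E (f (?E 0 0 0 1)) b c (f (?E 1 0 0 0)))"
      by (rule lin_dual_E_alg_eqI[OF f into]) (simp_all add: bc[symmetric])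
    then show "f \<in> ?\<phi> ` ?A"
      by (rule image_eqI) simp
  qed
  moreover have "?\<phi> ` ?A \<subseteq> lin_dual ?A"
    using into by (rule image_subsetI)
  ultimately show ?thesis
    unfolding bij_betw_def by (simp add: subset_antisym)
qed

lemma E_alg_frobenius_map_not_inj:
  fixes l m n :: "'a::field"
  assumes D: "l * m - n\<^sup>2 = 0" and \<epsilon>: "\<epsilon> \<in> lin_dual (E_alg l m n)"
  shows "\<not> inj_on (frobenius_map (E_alg l m n) \<epsilon>) (E_alg l m n)"
proof
  let ?A = "E_alg l m n" and ?E = "E_mat l m n"
  let ?\<phi> = "frobenius_map ?A \<epsilon>"
  assume inj: "inj_on ?\<phi> ?A"
  obtain u v where uv: "(u, v) \<noteq> (0, 0)" "l * u + n * v = 0" "n * u + m * v = 0"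
    using det2_zero_kernel_nontrivial[OF D] .
  obtain t s where ts: "(t, s) \<noteq> (0, 0)"
    "(u * \<epsilon> (?E 0 1 0 0) + v * \<epsilon> (?E 0 0 1 0)) * t + \<epsilon> (?E 0 0 0 1) * s = 0"
    using linear_form_nontrivial_zero .
  txt \<open>\<open>(u, v)\<close> is killed by the Gram matrix and \<open>(t, s)\<close> by the values of \<open>\<epsilon>\<close>, so \<open>?y\<close>
    pairs to zero with everything.\<close>
  let ?y = "?E 0 (t * u) (t * v) s"
  have "?\<phi> ?y = ?\<phi> (?E 0 0 0 0)"
  proof
    fix e
    show "?\<phi> ?y e = ?\<phi> (?E 0 0 0 0) e"
    proof (cases "e \<in> ?A")
      case True
      then obtain a b c d where e: "e = ?E a b c d"
        by (rule E_algE)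
      have "?y * e = ?E 0 (a * (t * u)) (a * (t * v))
          (a * s + t * (b * (l * u + n * v) + c * (n * u + m * v)))"
        unfolding e by (simp add: algebra_simps)
      also have "\<dots> = ?E 0 (a * (t * u)) (a * (t * v)) (a * s)"
        using uv by simp
      finally have "\<epsilon> (?y * e)
          = a * ((u * \<epsilon> (?E 0 1 0 0) + v * \<epsilon> (?E 0 0 1 0)) * t + \<epsilon> (?E 0 0 0 1) * s)"
        by (simp add: lin_dual_E_alg_expand[OF \<epsilon>, of 0 "a * (t * u)"] algebra_simps)
      moreover have "\<epsilon> (?E 0 0 0 0 * e) = 0"
        unfolding e by (simp add: lin_dual_E_alg_expand[OF \<epsilon>, of 0 0 0 0])
      ultimately show ?thesis
        using True ts(2) by (simp add: frobenius_map_def)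
    qed (simp add: frobenius_map_def)
  qed
  then have "?y = ?E 0 0 0 0"
    using inj by (simp add: inj_on_eq_iff)
  then show False
    using uv(1) ts(1) by auto
qed

theorem lemma4p2:
  fixes lam mu nu :: "'a::field_char_0"
  assumes "alg_closed TYPE('a)"
  shows "symmetric_frobenius (E_alg lam mu nu) \<longleftrightarrow> lam * mu - nu ^ 2 \<noteq> 0"
proof -
  let ?A = "E_alg lam mu nu"
  have "symmetric_frobenius ?A \<longleftrightarrow> (\<exists>\<epsilon>\<in>lin_dual ?A. bij_betw (frobenius_map ?A \<epsilon>) ?A (lin_dual ?A))"
    using comm_matrix_algebra_E_alg E_mat_in_E_alg E_mat_one_mult
    by (rule symmetric_frobenius_iff_frobenius_map_bij)
  also have "\<dots> \<longleftrightarrow> lam * mu - nu ^ 2 \<noteq> 0"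
  proof
    assume "\<exists>\<epsilon>\<in>lin_dual ?A. bij_betw (frobenius_map ?A \<epsilon>) ?A (lin_dual ?A)"
    then show "lam * mu - nu ^ 2 \<noteq> 0"
      using E_alg_frobenius_map_not_inj bij_betw_imp_inj_on by blast
  next
    assume "lam * mu - nu ^ 2 \<noteq> 0"
    then show "\<exists>\<epsilon>\<in>lin_dual ?A. bij_betw (frobenius_map ?A \<epsilon>) ?A (lin_dual ?A)"
      using E_socle_coord_in_lin_dual E_alg_frobenius_map_bij by blast
  qed
  finally show ?thesis .
qed

end
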